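(* Let $d\ge 3$, $m=d$, $\lambda>0$, and let $w_\star,v\in\mathbb{S}^{d-1}$ with $v^\top w_\star=0$. Set $Q=I_d+\lambda vv^\top$ and $P_\perp=I_d-w_\star w_\star^\top-vv^\top$, and let \[ \mathcal M=\{a\,w_\star w_\star^\top+b\,vv^\top+c\,P_\perp:\ a,b,c\in\mathbb{R}^+\}. \] Consider the population loss $\mathcal L(W)=\mathbb{E}\big(y-\sum_{j=1}^m (w_j^\top x)^2\big)^2$ for $W=(w_1,\dots,w_m)\in\mathbb{R}^{d\times m}$, where $x\sim\mathcal N(0,Q)$, $y=(x^\top w_\star)^2+\nu$, $\nu\sim\mathcal N(0,\sigma^2)$ independent of $x$. Let $\eta,\tilde\eta>0$ and consider the spectral gradient descent iterates $W_{k+1}=W_k-\eta\,\mathrm{polar}(\nabla_W\mathcal L(W_k))$ and the gradient descent iterates $\tilde W_{k+1}=\tilde W_k-\tilde\eta\,\nabla_W\mathcal L(\tilde W_k)$, with $M_k:=W_kW_k^\top$ and $\tilde M_k:=\tilde W_k\tilde W_k^\top$. If $M_0\in\mathcal M$ (resp. $\tilde M_0\in\mathcal M$), then $M_k\in\mathcal M$ (resp. $\tilde M_k\in\mathcal M$) for all $k\ge 0$.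
   Context: For a matrix $A$, $\mathrm{polar}(A):=A(A^\top A)^{-1/2}$, where $(\cdot)^{-1/2}$ is understood in the Moore–Penrose sense (so $\mathrm{polar}$ replaces nonzero singular values by $1$ and keeps singular vectors). *)

theory Defs
  imports "HOL-Probability.Probability"
begin

type_synonym 'n mat = "real ^ 'n ^ 'n"

definition outer :: "real ^ 'n \<Rightarrow> real ^ 'n \<Rightarrow> 'n mat" where
  "outer u v = (\<chi> i j. u $ i * v $ j)"

definition psd :: "'n::finite mat \<Rightarrow> bool" where
  "psd S \<longleftrightarrow> transpose S = S \<and> (\<forall>x. 0 \<le> x \<bullet> (S *v x))"

definition psd_sqrt :: "'n::finite mat \<Rightarrow> 'n mat" where
  "psd_sqrt S = (THE R. psd R \<and> R ** R = S)"

definition pinv :: "'n::finite mat \<Rightarrow> 'n mat" where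
  "pinv S = (THE X. S ** X ** S = S \<and> X ** S ** X = X \<and>
                    transpose (S ** X) = S ** X \<and> transpose (X ** S) = X ** S)"

definition polar :: "'n::finite mat \<Rightarrow> 'n mat" where
  "polar A = A ** pinv (psd_sqrt (transpose A ** A))"

text \<open>Euclidean gradient (w.r.t. the Frobenius inner product) of a real function of a matrix.\<close>
definition grad :: "('n::finite mat \<Rightarrow> real) \<Rightarrow> 'n mat \<Rightarrow> 'n mat" where
  "grad f W = (THE G. GDERIV f W :> G)"

definition gauss_density :: "'n::finite mat \<Rightarrow> real ^ 'n \<Rightarrow> real" where
  "gauss_density Q x =
     (2 * pi) powr (- real CARD('n) / 2) / sqrt (det Q) * exp (- (x \<bullet> (matrix_inv Q *v x)) / 2)"

text \<open>Joint law of (x, z): x ~ N(0,Q) independent of z ~ N(0,1); the noise is nu = sigma z.\<close>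
definition data_measure :: "'n::finite mat \<Rightarrow> ((real ^ 'n) \<times> real) measure" where
  "data_measure Q = density lborel (gauss_density Q) \<Otimes>\<^sub>M density lborel std_normal_density"

definition pop_loss :: "'n::finite mat \<Rightarrow> real ^ 'n \<Rightarrow> real \<Rightarrow> 'n mat \<Rightarrow> real" where
  "pop_loss Q wstar \<sigma> W =
     (\<integral>xz. (((fst xz \<bullet> wstar)\<^sup>2 + \<sigma> * snd xz)
              - (\<Sum>j\<in>UNIV. (column j W \<bullet> fst xz)\<^sup>2))\<^sup>2 \<partial>data_measure Q)"

definition inv_family :: "real ^ 'n \<Rightarrow> real ^ 'n \<Rightarrow> 'n::finite mat set" where
  "inv_family wstar v =
     {a *\<^sub>R outer wstar wstar + b *\<^sub>R outer v v
        + c *\<^sub>R (mat 1 - outer wstar wstar - outer v v) | a b c. a \<ge> 0 \<and> b \<ge> 0 \<and> c \<ge> 0}"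

end

theory Submission
  imports Defs
begin

text \<open>
  The population gradient at \<open>W\<close> is \<open>2 \<Gamma>(W W\<^sup>T) W\<close> with
  \<open>\<Gamma>(M) = -2 E[(y - x\<^sup>T M x) x x\<^sup>T]\<close>. If \<open>M = a w w\<^sup>T + b v v\<^sup>T + c P\<^sub>\<bottom>\<close>, then the law of
  \<open>(x, y)\<close> and the quadratic form \<open>x\<^sup>T M x\<close> are invariant under every reflection in a unit vector
  that equals \<open>w\<close>, equals \<open>v\<close>, or is orthogonal to both. Hence \<open>\<Gamma>(M)\<close> commutes with these
  reflections, which forces it into the same three-parameter form. Both updates therefore multiply
  \<open>W\<close> on the left by a matrix \<open>D\<close> of that form: \<open>D = I - 2\<eta>\<Gamma>\<close> for gradient descent, and for
  the spectral step \<open>polar(\<Gamma> W) = H \<Gamma> W\<close>, where \<open>H\<close> is the Moore-Penrose inverse square root of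
  \<open>\<Gamma> M \<Gamma>\<close>. Then \<open>D M D\<close> has coefficients of the form \<open>d a d \<ge> 0\<close>.
\<close>

section \<open>Reflections preserve Lebesgue measure\<close>

definition reflection :: "real^'n::finite \<Rightarrow> real^'n \<Rightarrow> real^'n" where
  "reflection u x = x - (2 * (u \<bullet> x)) *\<^sub>R u"

lemma linear_reflection: "linear (reflection u)"
  unfolding reflection_def by (intro linearI) (auto simp: algebra_simps)

lemma borel_measurable_reflection [measurable]: "reflection u \<in> borel_measurable borel"
  unfolding reflection_def by measurable

lemma inner_reflection_left: "reflection u x \<bullet> y = x \<bullet> reflection u y"
  by (simp add: reflection_def inner_diff_left inner_diff_right inner_commute)

lemma reflection_reflection: "norm u = 1 \<Longrightarrow> reflection u (reflection u x) = x"
  unfolding reflection_def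
  by (simp add: algebra_simps inner_commute dot_square_norm)

lemma inner_reflection_reflection: "norm u = 1 \<Longrightarrow> reflection u x \<bullet> reflection u y = x \<bullet> y"
  by (simp add: inner_reflection_left reflection_reflection)

lemma reflection_self: "norm u = 1 \<Longrightarrow> reflection u u = - u"
  by (simp add: reflection_def dot_square_norm scaleR_2)

lemma orthogonal_transformation_reflection: "norm u = 1 \<Longrightarrow> orthogonal_transformation (reflection u)"
  unfolding orthogonal_transformation
  using linear_reflection inner_reflection_reflection by (metis norm_eq_sqrt_inner)

lemma vimage_reflection: "norm u = 1 \<Longrightarrow> reflection u -` S = reflection u ` S"
  using reflection_reflection by (auto simp: image_iff) metis

lemma distr_density_reflection:
  fixes h :: "real^'n::finite \<Rightarrow> ennreal"
  assumes lborel: "distr lborel borel (reflection u) = lborel"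
    and [measurable]: "h \<in> borel_measurable borel" and h: "\<And>x. h (reflection u x) = h x"
  shows "distr (density lborel h) borel (reflection u) = density lborel h"
proof -
  have "distr (density lborel (\<lambda>x. h (reflection u x))) borel (reflection u) =
      density (distr lborel borel (reflection u)) h"
    by (rule density_distr[symmetric]) measurable
  then show ?thesis unfolding lborel h .
qed

lemma distr_lborel_reflection_wellorder:
  fixes u :: "real^'n::{finite,wellorder}"
  assumes u: "norm u = 1"
  shows "distr lborel borel (reflection u) = lborel"
proof (rule lborel_eqI[symmetric])
  fix l r :: "real^'n::{finite,wellorder}" assume le: "\<And>b. b \<in> Basis \<Longrightarrow> l \<bullet> b \<le> r \<bullet> b"
  have B: "reflection u -` box l r \<in> sets borel"
    using measurable_sets[OF borel_measurable_reflection, of "box l r" u] by simp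
  have T: "orthogonal_transformation (reflection u)" by (rule orthogonal_transformation_reflection[OF u])
  have "emeasure (distr lborel borel (reflection u)) (box l r) = emeasure lebesgue (reflection u ` box l r)"
    using B by (simp add: emeasure_distr vimage_reflection[OF u])
  also have "\<dots> = measure lebesgue (box l r)"
    using measurable_orthogonal_image[OF T lmeasurable_box] measure_orthogonal_image[OF T lmeasurable_box]
    by (simp add: emeasure_eq_measure2)
  also have "\<dots> = emeasure lborel (box l r)"
    by (simp add: emeasure_eq_measure2)
  finally show "emeasure (distr lborel borel (reflection u)) (box l r) = (\<Prod>b\<in>Basis. (r - l) \<bullet> b)"
    using le by (simp add: emeasure_lborel_box_eq)
qed simp

lemma prod_Basis_cart: "(\<Prod>b\<in>(Basis :: (real^'n::finite) set). f (x \<bullet> b)) = (\<Prod>i\<in>UNIV. f (x $ i))"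
  by (simp add: Basis_vec_def cart_eq_inner_axis axis_eq_axis prod.UNION_disjoint)

lemma emeasure_lborel_box_cart:
  fixes l r :: "real^'n::finite"
  assumes "\<And>i. l $ i \<le> r $ i"
  shows "emeasure lborel (box l r) = (\<Prod>i\<in>UNIV. r $ i - l $ i)"
proof -
  have "\<forall>b\<in>Basis. l \<bullet> b \<le> r \<bullet> b" using assms by (auto simp: Basis_vec_def inner_axis)
  then show ?thesis by (simp add: emeasure_lborel_box_eq prod_Basis_cart[where f = "\<lambda>t. t"])
qed

lemma lborel_eq_distr_coordinate_projection:
  fixes f :: "'n::finite \<Rightarrow> 'm::finite"
  assumes f: "inj f"
  defines "K \<equiv> {y :: real^'m. \<forall>j. j \<notin> range f \<longrightarrow> 0 < y $ j \<and> y $ j < 1}"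
  shows "lborel = distr (density lborel (indicator K)) borel (\<lambda>y. \<chi> i. y $ f i)"
proof (rule lborel_eqI)
  let ?\<pi> = "\<lambda>y :: real^'m. \<chi> i. y $ f i"
  have [measurable]: "?\<pi> \<in> borel_measurable borel"
    by (intro borel_measurable_continuous_onI linear_continuous_on bounded_linearI') (auto simp: vec_eq_iff)
  have [measurable]: "K \<in> sets borel" unfolding K_def by measurable
  fix l r :: "real^'n" assume lr: "\<And>b. b \<in> Basis \<Longrightarrow> l \<bullet> b \<le> r \<bullet> b"
  have le: "l $ i \<le> r $ i" for i using lr[of "axis i 1"] by (simp add: inner_axis)
  define l' :: "real^'m" where "l' = (\<chi> j. if j \<in> range f then l $ inv f j else 0)"
  define r' :: "real^'m" where "r' = (\<chi> j. if j \<in> range f then r $ inv f j else 1)"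
  have "y \<in> box l' r' \<longleftrightarrow> y \<in> K \<inter> ?\<pi> -` box l r" for y
  proof -
    have "y \<in> box l' r' \<longleftrightarrow> (\<forall>i. l' $ f i < y $ f i \<and> y $ f i < r' $ f i) \<and>
        (\<forall>j. j \<notin> range f \<longrightarrow> l' $ j < y $ j \<and> y $ j < r' $ j)"
      unfolding mem_box_cart by (metis rangeE)
    also have "\<dots> \<longleftrightarrow> (\<forall>i. l $ i < y $ f i \<and> y $ f i < r $ i) \<and>
        (\<forall>j. j \<notin> range f \<longrightarrow> 0 < y $ j \<and> y $ j < 1)"
      by (simp add: l'_def r'_def f)
    also have "\<dots> \<longleftrightarrow> y \<in> K \<inter> ?\<pi> -` box l r"
      by (auto simp: K_def mem_box_cart)
    finally show ?thesis .
  qed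
  then have "K \<inter> ?\<pi> -` box l r = box l' r'" by blast
  moreover have "?\<pi> -` box l r \<in> sets borel"
    using measurable_sets[of ?\<pi> borel borel "box l r"] by simp
  ultimately have "emeasure (distr (density lborel (indicator K)) borel ?\<pi>) (box l r) = emeasure lborel (box l' r')"
    by (simp add: emeasure_distr emeasure_restricted)
  also have "\<dots> = (\<Prod>j\<in>UNIV. r' $ j - l' $ j)"
    using le by (intro emeasure_lborel_box_cart) (simp add: l'_def r'_def)
  also have "\<dots> = (\<Prod>i\<in>UNIV. r $ i - l $ i)"
  proof -
    have "(\<Prod>j\<in>UNIV. r' $ j - l' $ j) = (\<Prod>j\<in>range f. r' $ j - l' $ j)"
      by (intro prod.mono_neutral_right) (auto simp: l'_def r'_def)
    also have "\<dots> = (\<Prod>i\<in>UNIV. r $ i - l $ i)"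
      using f by (simp add: prod.reindex l'_def r'_def)
    finally show ?thesis by simp
  qed
  also have "\<dots> = (\<Prod>b\<in>Basis. (r - l) \<bullet> b)"
    by (simp add: prod_Basis_cart[where f = "\<lambda>t. t"])
  finally show "emeasure (distr (density lborel (indicator K)) borel ?\<pi>) (box l r) = (\<Prod>b\<in>Basis. (r - l) \<bullet> b)" .
qed simp

text \<open>
  The library's measure invariance of orthogonal maps needs a well-ordered index type. So the
  reflection is lifted to \<open>real^'n bit0\<close>, where the extra coordinates range over a unit cube.
\<close>

lemma distr_lborel_reflection:
  fixes u :: "real^'n::finite"
  assumes u: "norm u = 1"
  shows "distr lborel borel (reflection u) = lborel"
proof -
  obtain f :: "'n \<Rightarrow> 'n bit0" where f: "inj f"
    using card_le_inj[of "UNIV::'n set" "UNIV::'n bit0 set"] by auto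
  define \<pi> :: "real^'n bit0 \<Rightarrow> real^'n" where "\<pi> y = (\<chi> i. y $ f i)" for y
  define K :: "(real^'n bit0) set" where "K = {y. \<forall>j. j \<notin> range f \<longrightarrow> 0 < y $ j \<and> y $ j < 1}"
  define u' :: "real^'n bit0" where "u' = (\<chi> j. if j \<in> range f then u $ inv f j else 0)"
  have [measurable]: "\<pi> \<in> borel_measurable borel"
    unfolding \<pi>_def by (intro borel_measurable_continuous_onI linear_continuous_on bounded_linearI')
      (auto simp: vec_eq_iff)
  have [measurable]: "K \<in> sets borel" unfolding K_def by measurable
  have inner_u': "u' \<bullet> y = u \<bullet> \<pi> y" for y
  proof -
    have "u' \<bullet> y = (\<Sum>j\<in>range f. u' $ j * y $ j)"
      unfolding inner_vec_def inner_real_def by (intro sum.mono_neutral_right) (auto simp: u'_def)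
    also have "\<dots> = u \<bullet> \<pi> y"
      using f by (simp add: sum.reindex inner_vec_def u'_def \<pi>_def)
    finally show ?thesis .
  qed
  have "\<pi> u' = u" by (simp add: \<pi>_def u'_def vec_eq_iff f)
  then have u': "norm u' = 1" using inner_u'[of u'] u by (simp add: norm_eq_sqrt_inner)
  have \<pi>_reflection: "\<pi> (reflection u' y) = reflection u (\<pi> y)" for y
    unfolding reflection_def inner_u' by (simp add: \<pi>_def vec_eq_iff u'_def f)
  have K_reflection: "indicator K (reflection u' y) = (indicator K y :: ennreal)" for y
    by (simp add: K_def reflection_def u'_def indicator_def)
  define D where "D = density lborel (indicator K :: _ \<Rightarrow> ennreal)"
  have \<pi>_D: "\<pi> \<in> measurable D borel" and reflection_D: "reflection u' \<in> measurable D borel"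
    by (simp_all add: D_def)
  have lborel: "lborel = distr D borel \<pi>"
    unfolding D_def K_def \<pi>_def by (rule lborel_eq_distr_coordinate_projection[OF f])
  have D_reflection: "distr D borel (reflection u') = D"
    unfolding D_def
    by (rule distr_density_reflection[OF distr_lborel_reflection_wellorder[OF u']]) (measurable, rule K_reflection)
  have "distr lborel borel (reflection u) = distr (distr D borel \<pi>) borel (reflection u)"
    by (simp only: lborel[symmetric])
  also have "\<dots> = distr D borel (reflection u \<circ> \<pi>)"
    by (rule distr_distr[OF borel_measurable_reflection \<pi>_D])
  also have "reflection u \<circ> \<pi> = \<pi> \<circ> reflection u'"
    by (simp add: fun_eq_iff \<pi>_reflection)
  also have "distr D borel (\<pi> \<circ> reflection u') = distr (distr D borel (reflection u')) borel \<pi>"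
    by (rule distr_distr[symmetric]) (simp_all add: reflection_D)
  also have "\<dots> = lborel"
    by (simp only: D_reflection lborel[symmetric])
  finally show ?thesis .
qed

lemma inner_reflection_sq:
  assumes u: "norm u = 1" and "u \<bullet> a = 0 \<or> u = a"
  shows "(a \<bullet> reflection u x)\<^sup>2 = (a \<bullet> x)\<^sup>2"
  using assms(2)
proof
  assume "u = a"
  then show ?thesis using u by (simp add: reflection_def inner_diff_right dot_square_norm inner_commute)
qed (simp add: reflection_def inner_diff_right inner_commute)

section \<open>Integrals against a Gaussian-tailed law\<close>

definition joint_measure :: "(real^'n::finite \<Rightarrow> real) \<Rightarrow> ((real^'n) \<times> real) measure" where
  "joint_measure g = density lborel g \<Otimes>\<^sub>M density lborel std_normal_density"

lemma data_measure_eq_joint_measure: "data_measure Q = joint_measure (gauss_density Q)"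
  by (simp add: data_measure_def joint_measure_def)

lemma sets_joint_measure [measurable_cong]: "sets (joint_measure g) = sets (borel \<Otimes>\<^sub>M borel)"
  unfolding joint_measure_def by (rule sets_pair_measure_cong) simp_all

lemma one_plus_sq_mult_exp_le:
  fixes b t :: real
  assumes b: "b > 0" and t: "t \<ge> 0"
  shows "(1 + t)\<^sup>2 * exp (- b * t) \<le> exp (- (b/2) * t) / (min 1 (b/4))\<^sup>2"
proof -
  define m where "m = min 1 (b/4)"
  have m: "m > 0" "m \<le> 1" "m \<le> b/4" using b by (auto simp: m_def)
  have "m * t \<le> b/4 * t" using m t by (intro mult_right_mono) auto
  then have "m * (1 + t) \<le> 1 + b/4 * t" using m by (simp add: distrib_left)
  also have "\<dots> \<le> exp (b/4 * t)" by (rule exp_ge_add_one_self)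
  finally have "(m * (1 + t))\<^sup>2 \<le> (exp (b/4 * t))\<^sup>2"
    using m t by (intro power_mono) auto
  also have "\<dots> = exp (b/2 * t)" by (simp add: power2_eq_square exp_add[symmetric])
  finally have "m\<^sup>2 * (1 + t)\<^sup>2 * exp (- b * t) \<le> exp (b/2 * t) * exp (- b * t)"
    by (simp add: power_mult_distrib)
  also have "\<dots> = exp (- (b/2) * t)" by (simp add: exp_add[symmetric])
  finally show ?thesis using m by (simp add: m_def field_simps)
qed

lemma nn_integral_exp_neg_square_finite:
  fixes b :: real
  assumes b: "b > 0"
  shows "(\<integral>\<^sup>+s. exp (- b * s\<^sup>2) \<partial>lborel) < \<infinity>"
proof -
  define \<sigma> where "\<sigma> = sqrt (1 / (2 * b))"
  have \<sigma>: "\<sigma> > 0" and \<sigma>2: "2 * \<sigma>\<^sup>2 = 1 / b" using b by (simp_all add: \<sigma>_def)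
  have "exp (- b * s\<^sup>2) = sqrt (2 * pi * \<sigma>\<^sup>2) * normal_density 0 \<sigma> s" for s
    using b \<sigma> \<sigma>2 by (simp add: normal_density_def field_simps)
  then have "(\<integral>\<^sup>+s. exp (- b * s\<^sup>2) \<partial>lborel) =
      ennreal (sqrt (2 * pi * \<sigma>\<^sup>2)) * (\<integral>\<^sup>+s. normal_density 0 \<sigma> s \<partial>lborel)"
    by (simp add: ennreal_mult nn_integral_cmult)
  also have "(\<integral>\<^sup>+s. normal_density 0 \<sigma> s \<partial>lborel) = 1"
    using \<sigma> by (subst nn_integral_eq_integral) auto
  finally show ?thesis by (simp add: ennreal_mult_less_top)
qed

lemma nn_integral_exp_neg_inner_finite:
  fixes b :: real
  assumes b: "b > 0"
  shows "(\<integral>\<^sup>+x. exp (- b * (x \<bullet> x)) \<partial>(lborel :: (real^'n::finite) measure)) < \<infinity>"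
proof -
  have product: "ennreal (exp (- b * (x \<bullet> x))) = (\<Prod>c\<in>Basis. ennreal (exp (- b * (x \<bullet> c)\<^sup>2)))"
    for x :: "real^'n"
  proof -
    have "exp (- b * (x \<bullet> x)) = (\<Prod>i\<in>UNIV. exp (- b * (x $ i)\<^sup>2))"
      by (simp add: inner_vec_def power2_eq_square sum_distrib_left exp_sum[symmetric])
    then show ?thesis
      unfolding prod_Basis_cart[where f = "\<lambda>t. ennreal (exp (- b * t\<^sup>2))"] by (simp add: prod_ennreal)
  qed
  have "(\<integral>\<^sup>+x. exp (- b * (x \<bullet> x)) \<partial>(lborel :: (real^'n) measure)) =
      (\<integral>\<^sup>+x. (\<Prod>c\<in>Basis. ennreal (exp (- b * (x \<bullet> c)\<^sup>2))) \<partial>(lborel :: (real^'n) measure))"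
    by (simp only: product)
  also have "\<dots> = (\<Prod>c\<in>(Basis :: (real^'n) set). \<integral>\<^sup>+s. exp (- b * s\<^sup>2) \<partial>lborel)"
    by (rule nn_integral_lborel_prod) auto
  also have "\<dots> < \<infinity>"
    using nn_integral_exp_neg_square_finite[OF b] by (simp add: power_less_top_ennreal)
  finally show ?thesis .
qed

lemma nn_integral_std_normal_one_plus_square_finite:
  "(\<integral>\<^sup>+z. ennreal (1 + z\<^sup>2) \<partial>density lborel std_normal_density) < \<infinity>"
proof -
  have "integrable lborel (\<lambda>z. std_normal_density z * z ^ 0 + std_normal_density z * z\<^sup>2)"
    by (intro Bochner_Integration.integrable_add integrable_std_normal_moment)
  then have "(\<integral>\<^sup>+z. std_normal_density z * (1 + z\<^sup>2) \<partial>lborel) < \<infinity>"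
    by (simp add: integrable_iff_bounded distrib_left)
  moreover have "(\<integral>\<^sup>+z. ennreal (1 + z\<^sup>2) \<partial>density lborel std_normal_density) =
      (\<integral>\<^sup>+z. std_normal_density z * (1 + z\<^sup>2) \<partial>lborel)"
    by (subst nn_integral_density) (simp_all add: ennreal_mult del: ennreal_plus)
  ultimately show ?thesis by simp
qed

lemma nn_integral_joint_measure_moment_finite:
  fixes g :: "real^'n::finite \<Rightarrow> real"
  assumes [measurable]: "g \<in> borel_measurable borel"
    and g: "\<And>x. g x \<le> C * exp (- b * (x \<bullet> x))" and b: "b > 0"
  shows "(\<integral>\<^sup>+xz. ennreal ((1 + fst xz \<bullet> fst xz)\<^sup>2 * (1 + (snd xz)\<^sup>2)) \<partial>joint_measure g) < \<infinity>"
proof -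
  define N where "N = density lborel std_normal_density"
  interpret N: prob_space N unfolding N_def by (rule prob_space_normal_density) simp
  define Cz where "Cz = (\<integral>\<^sup>+z. ennreal (1 + z\<^sup>2) \<partial>N)"
  define K where "K = \<bar>C\<bar> / (min 1 (b/4))\<^sup>2"
  have "K \<ge> 0" by (simp add: K_def)
  have tail: "ennreal (g x) * ennreal ((1 + x \<bullet> x)\<^sup>2) \<le> ennreal (K * exp (- (b/2) * (x \<bullet> x)))" for x
  proof (cases "g x \<le> 0")
    case False
    then have "0 < C * exp (- b * (x \<bullet> x))" using g[of x] by linarith
    then have "C > 0" by (simp add: zero_less_mult_iff)
    have "g x * (1 + x \<bullet> x)\<^sup>2 \<le> C * exp (- b * (x \<bullet> x)) * (1 + x \<bullet> x)\<^sup>2"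
      using g[of x] by (rule mult_right_mono) simp
    also have "\<dots> = C * ((1 + x \<bullet> x)\<^sup>2 * exp (- b * (x \<bullet> x)))"
      by (simp add: mult_ac)
    also have "\<dots> \<le> C * (exp (- (b/2) * (x \<bullet> x)) / (min 1 (b/4))\<^sup>2)"
      using one_plus_sq_mult_exp_le[OF b, of "x \<bullet> x"] \<open>C > 0\<close> by (intro mult_left_mono) auto
    also have "\<dots> = K * exp (- (b/2) * (x \<bullet> x))"
      using \<open>C > 0\<close> by (simp add: K_def)
    finally show ?thesis using False by (simp add: ennreal_mult[symmetric] ennreal_leI)
  qed (simp add: ennreal_neg)
  have "(\<integral>\<^sup>+xz. ennreal ((1 + fst xz \<bullet> fst xz)\<^sup>2 * (1 + (snd xz)\<^sup>2)) \<partial>joint_measure g) =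
      (\<integral>\<^sup>+x. \<integral>\<^sup>+z. ennreal ((1 + x \<bullet> x)\<^sup>2) * ennreal (1 + z\<^sup>2) \<partial>N \<partial>density lborel g)"
    unfolding joint_measure_def N_def[symmetric]
    by (subst N.nn_integral_fst[symmetric]) (simp_all add: ennreal_mult N_def)
  also have "\<dots> = (\<integral>\<^sup>+x. ennreal (g x) * ennreal ((1 + x \<bullet> x)\<^sup>2) * Cz \<partial>lborel)"
    by (simp add: nn_integral_cmult nn_integral_density Cz_def N_def mult.assoc)
  also have "\<dots> \<le> (\<integral>\<^sup>+x. ennreal (K * exp (- (b/2) * (x \<bullet> x))) * Cz \<partial>(lborel :: (real^'n) measure))"
    by (intro nn_integral_mono mult_right_mono tail) simp
  also have "\<dots> = ennreal K * (\<integral>\<^sup>+x. exp (- (b/2) * (x \<bullet> x)) \<partial>(lborel :: (real^'n) measure)) * Cz"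
    using \<open>K \<ge> 0\<close> by (simp add: ennreal_mult nn_integral_cmult nn_integral_multc mult.assoc)
  also have "\<dots> < \<infinity>"
    using nn_integral_exp_neg_inner_finite[of "b/2", where 'n='n] nn_integral_std_normal_one_plus_square_finite b
    by (simp add: ennreal_mult_less_top Cz_def N_def)
  finally show ?thesis .
qed

lemma integrable_joint_measure:
  fixes g :: "real^'n::finite \<Rightarrow> real"
  assumes [measurable]: "g \<in> borel_measurable borel"
    and g: "\<And>x. g x \<le> C * exp (- b * (x \<bullet> x))" and b: "b > 0"
    and [measurable]: "f \<in> borel_measurable (borel \<Otimes>\<^sub>M borel)"
    and f: "\<And>x z. \<bar>f (x, z)\<bar> \<le> K * (1 + x \<bullet> x)\<^sup>2 * (1 + z\<^sup>2)"
  shows "integrable (joint_measure g) f"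
proof (rule Bochner_Integration.integrable_bound)
  let ?h = "\<lambda>xz. \<bar>K\<bar> * ((1 + fst xz \<bullet> fst xz)\<^sup>2 * (1 + (snd xz)\<^sup>2))"
  have "(\<integral>\<^sup>+xz. ennreal ((1 + fst xz \<bullet> fst xz)\<^sup>2 * (1 + (snd xz)\<^sup>2)) \<partial>joint_measure g) < \<infinity>"
    by (rule nn_integral_joint_measure_moment_finite[OF _ g b]) simp
  then have "integrable (joint_measure g) (\<lambda>xz. (1 + fst xz \<bullet> fst xz)\<^sup>2 * (1 + (snd xz)\<^sup>2))"
    by (intro integrableI_bounded) simp_all
  then show "integrable (joint_measure g) ?h" by simp
  show "f \<in> borel_measurable (joint_measure g)" by simp
  show "AE xz in joint_measure g. norm (f xz) \<le> norm (?h xz)"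
  proof (intro AE_I2)
    fix xz :: "(real^'n) \<times> real"
    have "\<bar>f xz\<bar> \<le> K * ((1 + fst xz \<bullet> fst xz)\<^sup>2 * (1 + (snd xz)\<^sup>2))"
      using f[of "fst xz" "snd xz"] by (simp add: mult.assoc)
    also have "\<dots> \<le> ?h xz" by (intro mult_right_mono) auto
    finally show "norm (f xz) \<le> norm (?h xz)" by simp
  qed
qed

lemma integral_joint_measure_reflection:
  fixes g :: "real^'n::finite \<Rightarrow> real" and F :: "(real^'n) \<times> real \<Rightarrow> real"
  assumes [measurable]: "g \<in> borel_measurable borel"
    and g: "\<And>x. g (reflection u x) = g x" and u: "norm u = 1"
    and [measurable]: "F \<in> borel_measurable (borel \<Otimes>\<^sub>M borel)"
  shows "(\<integral>xz. F (reflection u (fst xz), snd xz) \<partial>joint_measure g) = (\<integral>xz. F xz \<partial>joint_measure g)"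
proof -
  define N where "N = density lborel std_normal_density"
  interpret N: prob_space N unfolding N_def by (rule prob_space_normal_density) simp
  let ?T = "\<lambda>(x, z). (reflection u x, z)"
  have "distr (density lborel g) borel (reflection u) = density lborel g"
    by (rule distr_density_reflection[OF distr_lborel_reflection[OF u]]) (measurable, simp add: g)
  moreover have N_id: "distr N borel (\<lambda>z. z) = N" by (rule distr_id2) (simp add: N_def)
  moreover have "distr (density lborel g) borel (reflection u) \<Otimes>\<^sub>M distr N borel (\<lambda>z. z) =
      distr (density lborel g \<Otimes>\<^sub>M N) (borel \<Otimes>\<^sub>M borel) ?T"
    by (rule pair_measure_distr) (simp_all add: N_id N.sigma_finite_measure_axioms, simp_all add: N_def)
  ultimately have "distr (joint_measure g) (borel \<Otimes>\<^sub>M borel) ?T = joint_measure g"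
    by (simp add: joint_measure_def N_def)
  then have "(\<integral>xz. F xz \<partial>joint_measure g) = (\<integral>xz. F xz \<partial>distr (joint_measure g) (borel \<Otimes>\<^sub>M borel) ?T)"
    by simp
  also have "\<dots> = (\<integral>xz. F (?T xz) \<partial>joint_measure g)"
  proof (rule integral_distr)
    show "?T \<in> measurable (joint_measure g) (borel \<Otimes>\<^sub>M borel)" by measurable
  qed simp
  finally show ?thesis by (simp add: case_prod_beta)
qed

lemma one_plus_abs_sq_le: "(1 + \<bar>z::real\<bar>)\<^sup>2 \<le> 2 * (1 + z\<^sup>2)"
  and one_plus_abs_le: "1 + \<bar>z::real\<bar> \<le> 2 * (1 + z\<^sup>2)"
proof -
  have "2 * \<bar>z\<bar> \<le> 1 + z\<^sup>2" using sum_squares_bound[of "\<bar>z\<bar>" 1] by (simp add: power2_eq_square)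
  moreover have "(1 + \<bar>z\<bar>)\<^sup>2 = 1 + 2 * \<bar>z\<bar> + z\<^sup>2" by (simp add: power2_eq_square algebra_simps)
  ultimately show sq: "(1 + \<bar>z\<bar>)\<^sup>2 \<le> 2 * (1 + z\<^sup>2)" by simp
  have "(1 + \<bar>z\<bar>) * 1 \<le> (1 + \<bar>z\<bar>) * (1 + \<bar>z\<bar>)" by (intro mult_left_mono) auto
  with sq show "1 + \<bar>z\<bar> \<le> 2 * (1 + z\<^sup>2)" by (simp add: power2_eq_square)
qed

definition quad_form :: "real^'n::finite^'n \<Rightarrow> real^'n \<Rightarrow> real" where
  "quad_form M x = x \<bullet> (M *v x)"

lemma borel_measurable_quad_form [measurable]: "quad_form M \<in> borel_measurable borel"
proof -
  have "(\<lambda>x. M *v x) \<in> borel_measurable borel"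
    by (intro borel_measurable_continuous_onI linear_continuous_on matrix_vector_mul_bounded_linear)
  then show ?thesis unfolding quad_form_def by measurable
qed

lemma quad_form_add: "quad_form (M + K) x = quad_form M x + quad_form K x"
  by (simp add: quad_form_def matrix_vector_mult_add_rdistrib inner_add_right)

lemma quad_form_eq_sum: "quad_form K x = (\<Sum>i\<in>UNIV. \<Sum>j\<in>UNIV. K $ i $ j * (x $ i * x $ j))"
  by (simp add: quad_form_def inner_vec_def matrix_vector_mult_def sum_distrib_left mult_ac)

lemma abs_quad_form_le: "\<bar>quad_form M x\<bar> \<le> (real CARD('n))\<^sup>2 * norm M * (x \<bullet> x)"
  for M :: "real^'n::finite^'n"
proof -
  have entries: "\<bar>M $ i $ j\<bar> \<le> norm M" for i j
    by (rule order_trans[OF component_le_norm_cart Finite_Cartesian_Product.norm_nth_le])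
  have "\<bar>quad_form M x\<bar> \<le> norm x * norm (M *v x)"
    unfolding quad_form_def by (rule Cauchy_Schwarz_ineq2)
  also have "norm (M *v x) \<le> onorm ((*v) M) * norm x"
    by (rule onorm) (rule matrix_vector_mul_bounded_linear)
  also have "onorm ((*v) M) \<le> (real CARD('n))\<^sup>2 * norm M"
    using onorm_le_matrix_component[OF entries] by (simp add: power2_eq_square)
  finally show ?thesis
    by (simp add: mult_left_mono mult_right_mono power2_norm_eq_inner[symmetric] power2_eq_square mult_ac)
qed

lemma inner_mult_vector_eq_inner_outer: "a \<bullet> (G *v c) = outer a c \<bullet> G"
  by (simp add: inner_vec_def outer_def matrix_vector_mult_def sum_distrib_left mult_ac)

lemma outer_mult_vector: "outer a c *v x = (c \<bullet> x) *\<^sub>R a"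
  by (simp add: outer_def matrix_vector_mult_def vec_eq_iff inner_vec_def sum_distrib_left mult_ac)

lemma quad_form_outer: "quad_form (outer a c) x = (x \<bullet> a) * (x \<bullet> c)"
  by (simp add: quad_form_def outer_mult_vector inner_commute)

lemma inner_transpose_transpose: "transpose X \<bullet> transpose Y = X \<bullet> (Y :: real^'n::finite^'m::finite)"
  unfolding inner_vec_def transpose_def by simp (rule sum.swap)

lemma inner_mult_transpose_left: "(H ** transpose W) \<bullet> G = H \<bullet> (G ** W)"
  for H W G :: "real^'n::finite^'n"
proof -
  have "(H ** transpose W) \<bullet> G = (\<Sum>i\<in>UNIV. \<Sum>j\<in>UNIV. \<Sum>k\<in>UNIV. H $ i $ k * W $ j $ k * G $ i $ j)"
    by (simp add: inner_vec_def matrix_matrix_mult_def transpose_def sum_distrib_right sum_distrib_left mult_ac)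
  also have "\<dots> = (\<Sum>i\<in>UNIV. \<Sum>k\<in>UNIV. \<Sum>j\<in>UNIV. H $ i $ k * W $ j $ k * G $ i $ j)"
    by (rule sum.cong[OF refl], rule sum.swap)
  also have "\<dots> = H \<bullet> (G ** W)"
    by (simp add: inner_vec_def matrix_matrix_mult_def sum_distrib_left mult_ac)
  finally show ?thesis .
qed

lemma inner_mult_transpose_right: "(W ** transpose H) \<bullet> G = H \<bullet> (transpose G ** W)"
  for H W G :: "real^'n::finite^'n"
proof -
  have "(W ** transpose H) \<bullet> G = transpose (W ** transpose H) \<bullet> transpose G"
    by (simp add: inner_transpose_transpose)
  also have "\<dots> = (H ** transpose W) \<bullet> transpose G" by (simp add: matrix_transpose_mul)
  finally show ?thesis by (simp add: inner_mult_transpose_left)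
qed

lemma matrix_add_rdistrib: "(A + B) ** C = A ** C + B ** C"
  for A B :: "'a::semiring_1^'n::finite^'m::finite" and C :: "'a^'p::finite^'n"
  by (vector matrix_matrix_mult_def sum.distrib[symmetric] field_simps)

lemma matrix_diff_rdistrib: "(A - B) ** C = A ** C - B ** C"
  for A B :: "'a::ring_1^'n::finite^'m::finite" and C :: "'a^'p::finite^'n"
  by (vector matrix_matrix_mult_def sum_subtractf[symmetric] field_simps)

lemma matrix_diff_ldistrib: "C ** (A - B) = C ** A - C ** B"
  for A B :: "'a::ring_1^'p::finite^'n::finite" and C :: "'a^'n^'m::finite"
  by (vector matrix_matrix_mult_def sum_subtractf[symmetric] field_simps)

lemma has_derivative_mult_transpose:
  "((\<lambda>W :: real^'n::finite^'n. W ** transpose W) has_derivative (\<lambda>H. W ** transpose H + H ** transpose W)) (at W)"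
proof -
  have bilinear: "bounded_bilinear (\<lambda>A B :: real^'n^'n. A ** B)"
    by (rule bilinear_conv_bounded_bilinear[THEN iffD1])
      (auto intro!: linearI simp: bilinear_def matrix_add_ldistrib matrix_add_rdistrib
        matrix_scalar_ac scalar_matrix_assoc)
  have transpose: "bounded_linear (transpose :: real^'n^'n \<Rightarrow> real^'n^'n)"
    by (rule linear_conv_bounded_linear[THEN iffD1]) (auto intro!: linearI simp: transpose_def vec_eq_iff)
  show ?thesis
    using bounded_bilinear.FDERIV[OF bilinear has_derivative_ident bounded_linear_imp_has_derivative[OF transpose]]
    by simp
qed

lemma grad_eqI:
  fixes f :: "real^'n::finite^'n \<Rightarrow> real"
  assumes "GDERIV f x :> D"
  shows "grad f x = D"
  unfolding grad_def
proof (rule the_equality)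
  show "GDERIV f x :> D" by (rule assms)
  fix E assume "GDERIV f x :> E"
  then have "(\<lambda>h. h \<bullet> E) = (\<lambda>h. h \<bullet> D)" using assms unfolding gderiv_def by (rule has_derivative_unique)
  then have "(E - D) \<bullet> E = (E - D) \<bullet> D" by metis
  then have "(E - D) \<bullet> (E - D) = 0" by (simp add: inner_diff_right)
  then show "E = D" by simp
qed

lemma has_derivative_quadratic_remainder:
  fixes f :: "'a::real_normed_vector \<Rightarrow> 'b::real_normed_vector"
  assumes L: "bounded_linear L" and c: "c \<ge> 0"
    and remainder: "\<And>h. norm (f (x + h) - f x - L h) \<le> c * (norm h)\<^sup>2"
  shows "(f has_derivative L) (at x)"
  unfolding has_derivative_at_alt
proof (intro conjI L allI impI)
  fix e :: real assume "e > 0"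
  show "\<exists>d>0. \<forall>y. norm (y - x) < d \<longrightarrow> norm (f y - f x - L (y - x)) \<le> e * norm (y - x)"
  proof (intro exI conjI allI impI)
    show "e / (c + 1) > 0" using \<open>e > 0\<close> c by simp
    fix y assume y: "norm (y - x) < e / (c + 1)"
    have "norm (f y - f x - L (y - x)) \<le> c * (norm (y - x))\<^sup>2"
      using remainder[of "y - x"] by simp
    also have "\<dots> \<le> (c + 1) * (norm (y - x))\<^sup>2"
      by (intro mult_right_mono) auto
    also have "\<dots> \<le> (c + 1) * (e / (c + 1) * norm (y - x))"
      using y c unfolding power2_eq_square by (intro mult_left_mono mult_right_mono) auto
    also have "\<dots> = e * norm (y - x)" using c by simp
    finally show "norm (f y - f x - L (y - x)) \<le> e * norm (y - x)" .
  qed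
qed

lemma psd_symmetric: "psd R \<Longrightarrow> transpose R = R"
  by (simp add: psd_def)

lemma inner_transpose_mult_vector: "x \<bullet> (transpose A *v y) = (A *v x) \<bullet> y"
  for A :: "real^'n::finite^'m::finite"
  by (metis dot_lmul_matrix inner_commute transpose_matrix_vector)

lemma transpose_congruence: "transpose P = P \<Longrightarrow> transpose (transpose A ** P ** A) = transpose A ** P ** A"
  for A P :: "real^'n::finite^'n"
  by (simp add: matrix_transpose_mul matrix_mul_assoc)

lemma psd_congruence:
  fixes A P :: "real^'n::finite^'n"
  assumes P: "psd P"
  shows "psd (transpose A ** P ** A)"
  unfolding psd_def
proof (intro conjI allI)
  show "transpose (transpose A ** P ** A) = transpose A ** P ** A"
    by (rule transpose_congruence[OF psd_symmetric[OF P]])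
  fix x
  have "x \<bullet> ((transpose A ** P ** A) *v x) = (A *v x) \<bullet> (P *v (A *v x))"
    by (simp only: matrix_vector_mul_assoc[symmetric] inner_transpose_mult_vector)
  also have "\<dots> \<ge> 0" using P by (simp add: psd_def)
  finally show "0 \<le> x \<bullet> ((transpose A ** P ** A) *v x)" .
qed

lemma psd_mult_vector_eq_0:
  assumes R: "psd R" and y: "y \<bullet> (R *v y) = 0"
  shows "R *v y = 0"
proof (rule ccontr)
  assume "R *v y \<noteq> 0"
  define z where "z = R *v y"
  define q where "q = z \<bullet> (R *v z)"
  have s: "z \<bullet> z > 0" using \<open>R *v y \<noteq> 0\<close> by (simp add: z_def)
  have q: "q \<ge> 0" using R by (simp add: q_def psd_def)
  define t where "t = (z \<bullet> z) / (q + 1)"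
  have t: "t > 0" using s q by (simp add: t_def)
  have "y \<bullet> (R *v z) = z \<bullet> (R *v y)"
    using inner_transpose_mult_vector[of y R z] psd_symmetric[OF R] by (simp add: inner_commute)
  then have "0 \<le> (y - t *\<^sub>R z) \<bullet> (R *v (y - t *\<^sub>R z)) \<longleftrightarrow> t * (2 * (z \<bullet> z)) \<le> t * (t * q)"
    using y by (simp add: vec.diff vec.scale q_def z_def algebra_simps)
  moreover have "0 \<le> (y - t *\<^sub>R z) \<bullet> (R *v (y - t *\<^sub>R z))" using R by (simp add: psd_def)
  ultimately have "2 * (z \<bullet> z) \<le> t * q" using t by simp
  also have "t * q \<le> z \<bullet> z" using s q by (simp add: t_def field_simps)
  finally show False using s by simp
qed

lemma trace_symmetric_sandwich:
  fixes D A :: "real^'n::finite^'n"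
  assumes "transpose D = D"
  shows "trace (D ** A ** D) = (\<Sum>k\<in>UNIV. D $ k \<bullet> (A *v D $ k))"
proof -
  have D: "D $ n $ k = D $ k $ n" for n k using assms by (metis transpose_def vec_lambda_beta)
  have "trace (D ** A ** D) = (\<Sum>k\<in>UNIV. \<Sum>n\<in>UNIV. \<Sum>i\<in>UNIV. D $ k $ i * A $ i $ n * D $ k $ n)"
    unfolding trace_def by (simp add: matrix_matrix_mult_def sum_distrib_right D)
  also have "\<dots> = (\<Sum>k\<in>UNIV. \<Sum>i\<in>UNIV. \<Sum>n\<in>UNIV. D $ k $ i * A $ i $ n * D $ k $ n)"
    by (rule sum.cong[OF refl], rule sum.swap)
  also have "\<dots> = (\<Sum>k\<in>UNIV. D $ k \<bullet> (A *v D $ k))"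
    by (simp add: inner_vec_def matrix_vector_mult_def sum_distrib_left mult_ac)
  finally show ?thesis .
qed

lemma psd_square_inj:
  fixes R S :: "real^'n::finite^'n"
  assumes R: "psd R" and S: "psd S" and eq: "R ** R = S ** S"
  shows "R = S"
proof -
  define D where "D = R - S"
  have D: "transpose D = D"
    using psd_symmetric[OF R] psd_symmetric[OF S] by (simp add: D_def transpose_def vec_eq_iff)
  have "trace (D ** R ** D) + trace (D ** S ** D) = trace (D ** R ** D) + trace (D ** (D ** S))"
    using trace_mul_sym[of "D ** S" D] by (simp add: matrix_mul_assoc)
  also have "\<dots> = trace (D ** (R ** D + D ** S))"
    by (simp add: matrix_add_ldistrib trace_add matrix_mul_assoc)
  also have "R ** D + D ** S = 0"
    by (simp add: D_def matrix_diff_ldistrib matrix_diff_rdistrib eq)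
  finally have "(\<Sum>k\<in>UNIV. D $ k \<bullet> (R *v D $ k)) + (\<Sum>k\<in>UNIV. D $ k \<bullet> (S *v D $ k)) = 0"
    by (simp add: trace_symmetric_sandwich[OF D] trace_def[of 0])
  moreover have "D $ k \<bullet> (R *v D $ k) \<ge> 0" "D $ k \<bullet> (S *v D $ k) \<ge> 0" for k
    using R S by (simp_all add: psd_def)
  ultimately have RD: "D $ k \<bullet> (R *v D $ k) = 0" and SD: "D $ k \<bullet> (S *v D $ k) = 0" for k
    by (simp_all add: add_nonneg_eq_0_iff sum_nonneg sum_nonneg_eq_0_iff)
  have "D *v v = R *v v - S *v v" for v by (simp add: D_def matrix_vector_mult_diff_rdistrib)
  then have "D *v D $ k = 0" for k
    using psd_mult_vector_eq_0[OF R RD[of k]] psd_mult_vector_eq_0[OF S SD[of k]] by simp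
  moreover have "(D *v D $ k) $ k = D $ k \<bullet> D $ k" for k
    by (simp add: matrix_vector_mult_def inner_vec_def)
  ultimately have "D $ k = 0" for k by (metis inner_eq_zero_iff zero_index)
  then show ?thesis by (simp add: D_def vec_eq_iff)
qed

lemma psd_sqrt_eqI: "psd R \<Longrightarrow> R ** R = S \<Longrightarrow> psd_sqrt S = R"
  unfolding psd_sqrt_def by (rule the_equality) (auto intro: psd_square_inj)

lemma moore_penrose_inverse_unique:
  fixes S X Y :: "real^'n::finite^'n"
  assumes X1: "S ** X ** S = S" and X2: "X ** S ** X = X"
    and X3: "transpose (S ** X) = S ** X" and X4: "transpose (X ** S) = X ** S"
    and Y1: "S ** Y ** S = S" and Y2: "Y ** S ** Y = Y"
    and Y3: "transpose (S ** Y) = S ** Y" and Y4: "transpose (Y ** S) = Y ** S"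
  shows "X = Y"
proof -
  have "X = X ** transpose (S ** X)" using X2 by (simp add: X3 matrix_mul_assoc)
  also have "\<dots> = X ** transpose (S ** Y ** S ** X)" by (simp add: Y1)
  also have "\<dots> = X ** (transpose (S ** X) ** transpose (S ** Y))"
    by (simp add: matrix_transpose_mul matrix_mul_assoc)
  also have "\<dots> = (X ** S ** X) ** S ** Y" by (simp add: X3 Y3 matrix_mul_assoc)
  also have "\<dots> = (X ** S) ** (Y ** S ** Y)" by (simp add: X2 Y2 matrix_mul_assoc)
  also have "\<dots> = transpose (X ** S) ** transpose (Y ** S) ** Y" by (simp add: X4 Y4 matrix_mul_assoc)
  also have "\<dots> = transpose (Y ** S ** X ** S) ** Y" by (simp add: matrix_transpose_mul matrix_mul_assoc)
  also have "Y ** S ** X ** S = Y ** S" using X1 by (metis matrix_mul_assoc)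
  finally show ?thesis using Y2 by (simp add: Y4)
qed

lemma pinv_eqI:
  fixes S X :: "real^'n::finite^'n"
  assumes "S ** X ** S = S" "X ** S ** X = X" "transpose (S ** X) = S ** X" "transpose (X ** S) = X ** S"
  shows "pinv S = X"
  unfolding pinv_def using assms by (blast intro: moore_penrose_inverse_unique)

lemma mult_transpose_eq_0:
  fixes B :: "real^'n::finite^'m::finite"
  assumes "B ** transpose B = 0"
  shows "B = 0"
proof -
  have "B $ i \<bullet> B $ i = 0" for i
    using arg_cong[OF assms, of "\<lambda>M. M $ i $ i"]
    by (simp add: matrix_matrix_mult_def transpose_def inner_vec_def)
  then show ?thesis by (simp add: vec_eq_iff)
qed

lemma matrix_inv_eqI:
  fixes A B :: "real^'n::finite^'n"
  assumes AB: "A ** B = mat 1" and BA: "B ** A = mat 1"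
  shows "matrix_inv A = B"
  unfolding matrix_inv_def
proof (rule someI2[of _ B])
  show "A ** B = mat 1 \<and> B ** A = mat 1" using AB BA by simp
  fix B' assume "A ** B' = mat 1 \<and> B' ** A = mat 1"
  then have "B' ** A = mat 1" by simp
  have "B' = B' ** (A ** B)" by (simp add: AB)
  also have "\<dots> = B" by (simp add: matrix_mul_assoc \<open>B' ** A = mat 1\<close>)
  finally show "B' = B" .
qed

lemma matrix_inv_rank_one_update:
  fixes v :: "real^'n::finite"
  assumes v: "v \<bullet> v = 1" and lam: "1 + lam \<noteq> 0"
  shows "matrix_inv (mat 1 + lam *\<^sub>R outer v v) = mat 1 - (lam / (1 + lam)) *\<^sub>R outer v v"
proof (rule matrix_inv_eqI)
  have outer: "outer v v ** outer v v = outer v v"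
    by (simp add: matrix_eq matrix_vector_mul_assoc[symmetric] outer_mult_vector inner_commute v)
  have "lam - lam / (1 + lam) - lam * (lam / (1 + lam)) = 0" using lam by (simp add: field_simps)
  then show "(mat 1 + lam *\<^sub>R outer v v) ** (mat 1 - (lam / (1 + lam)) *\<^sub>R outer v v) = mat 1"
    and "(mat 1 - (lam / (1 + lam)) *\<^sub>R outer v v) ** (mat 1 + lam *\<^sub>R outer v v) = mat 1"
    by (simp_all add: matrix_add_ldistrib matrix_add_rdistrib matrix_diff_ldistrib matrix_diff_rdistrib
        matrix_scalar_ac scalar_matrix_assoc[symmetric] outer algebra_simps flip: scaleR_diff_left scaleR_add_left)
qed

lemma sum_column_inner_sq: "(\<Sum>j\<in>UNIV. (column j W \<bullet> x)\<^sup>2) = quad_form (W ** transpose W) x"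
  for W :: "real^'n::finite^'n"
proof -
  have "column j W \<bullet> x = (transpose W *v x) $ j" for j
    by (simp add: column_def transpose_def matrix_vector_mult_def inner_vec_def mult_ac)
  moreover have "quad_form (W ** transpose W) x = (transpose W *v x) \<bullet> (transpose W *v x)"
    using inner_transpose_mult_vector[of x "transpose W" "transpose W *v x"]
    by (simp only: quad_form_def matrix_vector_mul_assoc[symmetric] transpose_transpose)
  ultimately show ?thesis by (simp add: inner_vec_def power2_eq_square)
qed

lemma symmetric_eigenvalues_eq:
  fixes G :: "real^'n::finite^'n"
  assumes "transpose G = G" and "G *v p = c *\<^sub>R p" and "G *v q = d *\<^sub>R q" and "p \<bullet> q \<noteq> 0"
  shows "c = d"
proof -
  have "p \<bullet> (G *v q) = (G *v p) \<bullet> q"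
    using inner_transpose_mult_vector[of p G q] assms(1) by simp
  then show ?thesis using assms(2-4) by simp
qed

lemma eigenvalue_const_on_subspace:
  fixes G :: "real^'n::finite^'n"
  assumes sym: "transpose G = G" and S: "subspace S"
    and eigen: "\<And>p. p \<in> S \<Longrightarrow> \<exists>c. G *v p = c *\<^sub>R p"
  obtains \<gamma> where "\<And>p. p \<in> S \<Longrightarrow> G *v p = \<gamma> *\<^sub>R p"
proof (cases "S \<subseteq> {0}")
  case True
  show ?thesis
  proof (rule that)
    fix p assume "p \<in> S"
    with True have "p = 0" by blast
    then show "G *v p = 0 *\<^sub>R p" by simp
  qed
next
  case False
  then obtain p0 where p0: "p0 \<in> S" "p0 \<noteq> 0" by blast
  obtain \<gamma> where G0: "G *v p0 = \<gamma> *\<^sub>R p0" using eigen[OF p0(1)] by blast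
  have "G *v p = \<gamma> *\<^sub>R p" if p: "p \<in> S" for p
  proof -
    obtain c where Gp: "G *v p = c *\<^sub>R p" using eigen[OF p] by blast
    have "c = \<gamma>" if "p \<noteq> 0"
    proof (cases "p \<bullet> p0 = 0")
      case False
      then show ?thesis using symmetric_eigenvalues_eq[OF sym Gp G0] by simp
    next
      case True
      define q where "q = p + p0"
      have "q \<in> S" using p p0 S by (simp add: q_def subspace_add)
      then obtain c' where Gq: "G *v q = c' *\<^sub>R q" using eigen by blast
      have "q \<bullet> p \<noteq> 0" "q \<bullet> p0 \<noteq> 0"
        using True \<open>p \<noteq> 0\<close> p0 by (simp_all add: q_def inner_add_left inner_commute[of p0 p])
      then show ?thesis
        using symmetric_eigenvalues_eq[OF sym Gq Gp] symmetric_eigenvalues_eq[OF sym Gq G0] by simp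
    qed
    then show ?thesis using Gp by (cases "p = 0") auto
  qed
  then show ?thesis by (rule that)
qed

definition pinv_sqrt :: "real \<Rightarrow> real" where
  "pinv_sqrt s = (if s > 0 then 1 / sqrt s else 0)"

lemma pinv_sqrt_nonneg: "pinv_sqrt s \<ge> 0"
  by (simp add: pinv_sqrt_def)

lemma pinv_sqrt_identities:
  fixes s :: real
  assumes s: "s \<ge> 0"
  defines "h \<equiv> pinv_sqrt s"
  shows "(h * s * (h * h * h)) * s * h = h"
    and "((h * h * h) * s * h) * s * (h * h * h) = h * h * h"
    and "s * (h * h * h) = h"
    and "(1 - h * s * h) * s * (1 - h * s * h) = 0"
proof -
  have key: "h * h * s = (if s > 0 then 1 else 0)" and zero: "s = 0 \<Longrightarrow> h = 0"
    using s by (auto simp: h_def pinv_sqrt_def field_simps)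
  have "(h * s * (h * h * h)) * s * h = (h * h * s) * (h * h * s) * h"
    and "((h * h * h) * s * h) * s * (h * h * h) = (h * h * s) * (h * h * s) * (h * h * h)"
    and "s * (h * h * h) = (h * h * s) * h"
    and "(1 - h * s * h) * s * (1 - h * s * h) = (1 - h * h * s) * s * (1 - h * h * s)"
    by (simp_all add: mult_ac)
  then show "(h * s * (h * h * h)) * s * h = h"
    and "((h * h * h) * s * h) * s * (h * h * h) = h * h * h"
    and "s * (h * h * h) = h"
    and "(1 - h * s * h) * s * (1 - h * s * h) = 0"
    using key zero s by (auto split: if_splits)
qed

lemma mult_nonneg_sandwich: "(a::real) \<ge> 0 \<Longrightarrow> x * a * x \<ge> 0"
  by (metis mult.commute mult.left_commute mult_nonneg_nonneg zero_le_square)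

section \<open>The population risk of a quadratic predictor\<close>

locale quadratic_regression =
  fixes g :: "real^'n::finite \<Rightarrow> real" and C b :: real and w :: "real^'n" and \<sigma> :: real
  assumes borel_measurable_density [measurable]: "g \<in> borel_measurable borel"
    and density_le: "\<And>x. g x \<le> C * exp (- b * (x \<bullet> x))"
    and decay_pos: "b > 0"
begin

definition residual :: "real^'n^'n \<Rightarrow> (real^'n) \<times> real \<Rightarrow> real" where
  "residual M xz = (fst xz \<bullet> w)\<^sup>2 + \<sigma> * snd xz - quad_form M (fst xz)"

definition risk :: "real^'n^'n \<Rightarrow> real" where
  "risk M = (\<integral>xz. (residual M xz)\<^sup>2 \<partial>joint_measure g)"

definition risk_grad :: "real^'n^'n \<Rightarrow> real^'n^'n" where
  "risk_grad M = (\<chi> i j. -2 * (\<integral>xz. residual M xz * (fst xz $ i * fst xz $ j) \<partial>joint_measure g))"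

lemma borel_measurable_residual [measurable]: "residual M \<in> borel_measurable (borel \<Otimes>\<^sub>M borel)"
  unfolding residual_def by measurable

lemma integrable_polynomial_growth:
  assumes "f \<in> borel_measurable (borel \<Otimes>\<^sub>M borel)"
    and "\<And>x z. \<bar>f (x, z)\<bar> \<le> K * (1 + x \<bullet> x)\<^sup>2 * (1 + z\<^sup>2)"
  shows "integrable (joint_measure g) f"
  using integrable_joint_measure[OF borel_measurable_density density_le decay_pos] assms by blast

lemma integrable_polynomial_growth_fst:
  assumes [measurable]: "h \<in> borel_measurable borel" and h: "\<And>x. \<bar>h x\<bar> \<le> K * (1 + x \<bullet> x)\<^sup>2"
  shows "integrable (joint_measure g) (\<lambda>xz. h (fst xz))"
proof (rule integrable_polynomial_growth)
  fix x :: "real^'n" and z :: real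
  have "\<bar>h x\<bar> \<le> K * (1 + x \<bullet> x)\<^sup>2 * 1" using h by simp
  also have "\<dots> \<le> K * (1 + x \<bullet> x)\<^sup>2 * (1 + z\<^sup>2)"
    using order_trans[OF abs_ge_zero h] by (intro mult_left_mono) auto
  finally show "\<bar>h (fst (x, z))\<bar> \<le> K * (1 + x \<bullet> x)\<^sup>2 * (1 + z\<^sup>2)" by simp
qed simp

lemma abs_residual_le:
  obtains R where "R \<ge> 0" "\<And>x z. \<bar>residual M (x, z)\<bar> \<le> R * ((1 + x \<bullet> x) * (1 + \<bar>z\<bar>))"
proof
  define R where "R = w \<bullet> w + \<bar>\<sigma>\<bar> + (real CARD('n))\<^sup>2 * norm M"
  show "R \<ge> 0" by (simp add: R_def)
  fix x :: "real^'n" and z :: real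
  define T where "T = (1 + x \<bullet> x) * (1 + \<bar>z\<bar>)"
  have T: "x \<bullet> x \<le> T" "\<bar>z\<bar> \<le> T"
    by (simp_all add: T_def algebra_simps add_increasing2 add_increasing)
  have "(x \<bullet> w)\<^sup>2 \<le> (x \<bullet> x) * (w \<bullet> w)" by (rule Cauchy_Schwarz_ineq)
  also have "\<dots> \<le> T * (w \<bullet> w)" using T by (intro mult_right_mono) auto
  finally have "\<bar>(x \<bullet> w)\<^sup>2\<bar> \<le> (w \<bullet> w) * T" by (simp add: mult.commute)
  moreover have "\<bar>\<sigma> * z\<bar> \<le> \<bar>\<sigma>\<bar> * T" using T by (simp add: abs_mult mult_left_mono)
  moreover have "\<bar>quad_form M x\<bar> \<le> (real CARD('n))\<^sup>2 * norm M * T"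
    using order_trans[OF abs_quad_form_le mult_left_mono[OF T(1)]] by simp
  moreover have "\<bar>a + b - c\<bar> \<le> \<bar>a\<bar> + \<bar>b\<bar> + \<bar>c\<bar>" for a b c :: real by arith
  ultimately have "\<bar>residual M (x, z)\<bar> \<le> (w \<bullet> w) * T + \<bar>\<sigma>\<bar> * T + (real CARD('n))\<^sup>2 * norm M * T"
    unfolding residual_def fst_conv snd_conv by (smt (verit))
  then have "\<bar>residual M (x, z)\<bar> \<le> R * T" by (simp add: R_def algebra_simps)
  then show "\<bar>residual M (x, z)\<bar> \<le> R * ((1 + x \<bullet> x) * (1 + \<bar>z\<bar>))" by (simp add: T_def)
qed

lemma integrable_residual_sq: "integrable (joint_measure g) (\<lambda>xz. (residual M xz)\<^sup>2)"
proof -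
  obtain R where "R \<ge> 0" and R: "\<And>x z. \<bar>residual M (x, z)\<bar> \<le> R * ((1 + x \<bullet> x) * (1 + \<bar>z\<bar>))"
    using abs_residual_le[of M] by blast
  show ?thesis
  proof (rule integrable_polynomial_growth)
    fix x :: "real^'n" and z :: real
    have "\<bar>(residual M (x, z))\<^sup>2\<bar> \<le> (R * ((1 + x \<bullet> x) * (1 + \<bar>z\<bar>)))\<^sup>2"
      using power_mono[OF R[of x z] abs_ge_zero, of 2] by simp
    also have "\<dots> = R\<^sup>2 * (1 + x \<bullet> x)\<^sup>2 * (1 + \<bar>z\<bar>)\<^sup>2" by (simp add: power_mult_distrib)
    also have "\<dots> \<le> R\<^sup>2 * (1 + x \<bullet> x)\<^sup>2 * (2 * (1 + z\<^sup>2))"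
      by (intro mult_left_mono one_plus_abs_sq_le) auto
    also have "\<dots> = (2 * R\<^sup>2) * (1 + x \<bullet> x)\<^sup>2 * (1 + z\<^sup>2)"
      by (simp add: mult_ac)
    finally show "\<bar>(residual M (x, z))\<^sup>2\<bar> \<le> (2 * R\<^sup>2) * (1 + x \<bullet> x)\<^sup>2 * (1 + z\<^sup>2)" .
  qed simp
qed

lemma integrable_residual_mult:
  assumes [measurable]: "h \<in> borel_measurable borel" and h: "\<And>x. \<bar>h x\<bar> \<le> K * (1 + x \<bullet> x)"
  shows "integrable (joint_measure g) (\<lambda>xz. residual M xz * h (fst xz))"
proof -
  obtain R where "R \<ge> 0" and R: "\<And>x z. \<bar>residual M (x, z)\<bar> \<le> R * ((1 + x \<bullet> x) * (1 + \<bar>z\<bar>))"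
    using abs_residual_le[of M] by blast
  show ?thesis
  proof (rule integrable_polynomial_growth)
    fix x :: "real^'n" and z :: real
    have "\<bar>residual M (x, z) * h x\<bar> \<le> R * ((1 + x \<bullet> x) * (1 + \<bar>z\<bar>)) * (K * (1 + x \<bullet> x))"
      unfolding abs_mult by (intro mult_mono R h) (auto simp: \<open>R \<ge> 0\<close>)
    also have "\<dots> \<le> R * ((1 + x \<bullet> x) * (2 * (1 + z\<^sup>2))) * (K * (1 + x \<bullet> x))"
      using order_trans[OF abs_ge_zero h] \<open>R \<ge> 0\<close>
      by (intro mult_right_mono mult_left_mono one_plus_abs_le) auto
    also have "\<dots> = (2 * R * K) * (1 + x \<bullet> x)\<^sup>2 * (1 + z\<^sup>2)"
      by (simp add: power2_eq_square algebra_simps)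
    finally show "\<bar>residual M (x, z) * h (fst (x, z))\<bar> \<le> (2 * R * K) * (1 + x \<bullet> x)\<^sup>2 * (1 + z\<^sup>2)"
      by simp
  qed simp
qed

lemma integral_residual_mult_quad_form:
  "(\<integral>xz. residual M xz * quad_form K (fst xz) \<partial>joint_measure g) =
    (\<Sum>i\<in>UNIV. \<Sum>j\<in>UNIV. K $ i $ j * (\<integral>xz. residual M xz * (fst xz $ i * fst xz $ j) \<partial>joint_measure g))"
proof -
  have int: "integrable (joint_measure g) (\<lambda>xz. residual M xz * (fst xz $ i * fst xz $ j))" for i j
  proof (rule integrable_residual_mult)
    fix x :: "real^'n"
    have "\<bar>x $ i * x $ j\<bar> \<le> norm x * norm x"
      unfolding abs_mult by (intro mult_mono component_le_norm_cart) auto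
    then show "\<bar>x $ i * x $ j\<bar> \<le> 1 * (1 + x \<bullet> x)" by (simp add: dot_square_norm power2_eq_square)
  qed (simp add: cart_eq_inner_axis)
  have "(\<integral>xz. residual M xz * quad_form K (fst xz) \<partial>joint_measure g) =
      (\<integral>xz. (\<Sum>i\<in>UNIV. \<Sum>j\<in>UNIV. K $ i $ j * (residual M xz * (fst xz $ i * fst xz $ j))) \<partial>joint_measure g)"
    by (simp add: quad_form_eq_sum sum_distrib_left mult_ac)
  also have "\<dots> = (\<Sum>i\<in>UNIV. \<integral>xz. (\<Sum>j\<in>UNIV. K $ i $ j * (residual M xz * (fst xz $ i * fst xz $ j))) \<partial>joint_measure g)"
    by (intro Bochner_Integration.integral_sum) (auto intro!: int)
  also have "\<dots> = (\<Sum>i\<in>UNIV. \<Sum>j\<in>UNIV. K $ i $ j * (\<integral>xz. residual M xz * (fst xz $ i * fst xz $ j) \<partial>joint_measure g))"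
    by (simp add: Bochner_Integration.integral_sum int)
  finally show ?thesis .
qed

lemma inner_risk_grad: "K \<bullet> risk_grad M = -2 * (\<integral>xz. residual M xz * quad_form K (fst xz) \<partial>joint_measure g)"
  unfolding integral_residual_mult_quad_form
  by (simp add: inner_vec_def risk_grad_def sum_distrib_left mult.left_commute)

lemma inner_risk_grad_mult_vector:
  "a \<bullet> (risk_grad M *v c) = -2 * (\<integral>xz. residual M xz * ((fst xz \<bullet> a) * (fst xz \<bullet> c)) \<partial>joint_measure g)"
  by (simp add: inner_mult_vector_eq_inner_outer inner_risk_grad quad_form_outer)

lemma transpose_risk_grad: "transpose (risk_grad M) = risk_grad M"
  by (simp add: risk_grad_def transpose_def vec_eq_iff mult_ac)

lemma integrable_quad_form_sq: "integrable (joint_measure g) (\<lambda>xz. (quad_form K (fst xz))\<^sup>2)"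
proof (rule integrable_polynomial_growth_fst)
  fix x :: "real^'n"
  have "\<bar>(quad_form K x)\<^sup>2\<bar> \<le> ((real CARD('n))\<^sup>2 * norm K * (x \<bullet> x))\<^sup>2"
    using power_mono[OF abs_quad_form_le[of K x] abs_ge_zero, of 2] by simp
  also have "\<dots> \<le> ((real CARD('n))\<^sup>2 * norm K)\<^sup>2 * (1 + x \<bullet> x)\<^sup>2"
    by (simp add: power_mult_distrib mult_left_mono power_mono)
  finally show "\<bar>(quad_form K x)\<^sup>2\<bar> \<le> ((real CARD('n))\<^sup>2 * norm K)\<^sup>2 * (1 + x \<bullet> x)\<^sup>2" .
qed simp

lemma risk_add:
  "risk (M + K) = risk M + K \<bullet> risk_grad M + (\<integral>xz. (quad_form K (fst xz))\<^sup>2 \<partial>joint_measure g)"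
proof -
  have "(residual (M + K) xz)\<^sup>2 =
      (residual M xz)\<^sup>2 + -2 * (residual M xz * quad_form K (fst xz)) + (quad_form K (fst xz))\<^sup>2" for xz
    by (simp add: residual_def quad_form_add power2_eq_square algebra_simps)
  moreover have "integrable (joint_measure g) (\<lambda>xz. residual M xz * quad_form K (fst xz))"
  proof (rule integrable_residual_mult)
    show "\<bar>quad_form K x\<bar> \<le> (real CARD('n))\<^sup>2 * norm K * (1 + x \<bullet> x)" for x
      by (rule order_trans[OF abs_quad_form_le]) (simp add: mult_left_mono)
  qed simp
  ultimately show ?thesis
    by (simp add: risk_def inner_risk_grad integrable_residual_sq integrable_quad_form_sq)
qed

lemma risk_remainder_le:
  obtains c where "c \<ge> 0" "\<And>K. \<bar>risk (M + K) - risk M - K \<bullet> risk_grad M\<bar> \<le> c * (norm K)\<^sup>2"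
proof
  define m4 where "m4 = (\<integral>xz. (fst xz \<bullet> fst xz)\<^sup>2 \<partial>joint_measure g)"
  show "(real CARD('n))^ 4 * m4 \<ge> 0" unfolding m4_def by (simp add: integral_nonneg_AE)
  fix K :: "real^'n^'n"
  have "integrable (joint_measure g) (\<lambda>xz. (fst xz \<bullet> fst xz)\<^sup>2)"
    by (rule integrable_polynomial_growth_fst[where K = 1]) (simp_all add: power_mono)
  then have "(\<integral>xz. (quad_form K (fst xz))\<^sup>2 \<partial>joint_measure g) \<le>
      (\<integral>xz. ((real CARD('n))\<^sup>2 * norm K)\<^sup>2 * (fst xz \<bullet> fst xz)\<^sup>2 \<partial>joint_measure g)"
    using power_mono[OF abs_quad_form_le[of K] abs_ge_zero, of _ 2]
    by (intro integral_mono integrable_quad_form_sq integrable_mult_right) (simp_all add: power_mult_distrib)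
  also have "\<dots> = (real CARD('n))^ 4 * m4 * (norm K)\<^sup>2"
    by (simp add: m4_def power_mult_distrib)
  finally show "\<bar>risk (M + K) - risk M - K \<bullet> risk_grad M\<bar> \<le> (real CARD('n))^ 4 * m4 * (norm K)\<^sup>2"
    by (simp add: risk_add)
qed

lemma has_derivative_risk: "(risk has_derivative (\<lambda>K. K \<bullet> risk_grad M)) (at M)"
proof -
  obtain c where "c \<ge> 0" "\<And>K. \<bar>risk (M + K) - risk M - K \<bullet> risk_grad M\<bar> \<le> c * (norm K)\<^sup>2"
    using risk_remainder_le[of M] by blast
  then show ?thesis
    by (intro has_derivative_quadratic_remainder bounded_linear_inner_left) simp_all
qed

lemma grad_risk_mult_transpose:
  "grad (\<lambda>W. risk (W ** transpose W)) W = 2 *\<^sub>R (risk_grad (W ** transpose W) ** W)"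
proof (rule grad_eqI)
  let ?G = "risk_grad (W ** transpose W)"
  have "((\<lambda>W. risk (W ** transpose W)) has_derivative (\<lambda>H. (W ** transpose H + H ** transpose W) \<bullet> ?G)) (at W)"
    using has_derivative_compose[OF has_derivative_mult_transpose has_derivative_risk] by simp
  moreover have "(W ** transpose H + H ** transpose W) \<bullet> ?G = H \<bullet> (2 *\<^sub>R (?G ** W))" for H
    using inner_mult_transpose_right[of W H ?G]
    by (simp add: inner_add_left inner_mult_transpose_left transpose_risk_grad)
  ultimately show "GDERIV (\<lambda>W. risk (W ** transpose W)) W :> 2 *\<^sub>R (?G ** W)"
    unfolding gderiv_def by simp
qed

lemma risk_grad_eigenvector_reflection:
  assumes u: "norm u = 1" and g: "\<And>x. g (reflection u x) = g x"
    and w: "\<And>x. (reflection u x \<bullet> w)\<^sup>2 = (x \<bullet> w)\<^sup>2"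
    and M: "\<And>x. quad_form M (reflection u x) = quad_form M x"
  shows "risk_grad M *v u = (u \<bullet> (risk_grad M *v u)) *\<^sub>R u"
proof -
  let ?G = "risk_grad M"
  have residual: "residual M (reflection u (fst xz), snd xz) = residual M xz" for xz
    by (simp add: residual_def w M)
  have invariant: "reflection u a \<bullet> (?G *v reflection u c) = a \<bullet> (?G *v c)" for a c
  proof -
    define F where "F xz = residual M xz * ((fst xz \<bullet> reflection u a) * (fst xz \<bullet> reflection u c))" for xz
    have "F \<in> borel_measurable (borel \<Otimes>\<^sub>M borel)" unfolding F_def by measurable
    then have "(\<integral>xz. F xz \<partial>joint_measure g) = (\<integral>xz. F (reflection u (fst xz), snd xz) \<partial>joint_measure g)"
      by (rule integral_joint_measure_reflection[OF borel_measurable_density g u, of F, symmetric])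
    also have "\<dots> = (\<integral>xz. residual M xz * ((fst xz \<bullet> a) * (fst xz \<bullet> c)) \<partial>joint_measure g)"
      by (simp add: F_def residual inner_reflection_reflection[OF u])
    finally show ?thesis by (simp add: inner_risk_grad_mult_vector F_def)
  qed
  have "a \<bullet> (?G *v u) = a \<bullet> ((u \<bullet> (?G *v u)) *\<^sub>R u)" for a
  proof -
    have "a \<bullet> (?G *v u) = - (reflection u a \<bullet> (?G *v u))"
      using invariant[of a u] by (simp add: reflection_self[OF u] vec.neg)
    then show ?thesis by (simp add: reflection_def algebra_simps) (metis inner_commute)
  qed
  then show ?thesis using vector_eq_ldot by blast
qed

end

section \<open>Matrices adapted to an orthonormal pair\<close>

locale orthonormal_pair =
  fixes w v :: "real^'n::finite"
  assumes norm_w: "norm w = 1" and norm_v: "norm v = 1" and orthogonal: "v \<bullet> w = 0"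
begin

lemma inner_w_w [simp]: "w \<bullet> w = 1" and inner_v_v [simp]: "v \<bullet> v = 1"
  and inner_v_w [simp]: "v \<bullet> w = 0" and inner_w_v [simp]: "w \<bullet> v = 0"
  using norm_w norm_v orthogonal by (simp_all add: dot_square_norm inner_commute)

definition diag3 :: "real \<Rightarrow> real \<Rightarrow> real \<Rightarrow> real^'n^'n" where
  "diag3 a b c = a *\<^sub>R outer w w + b *\<^sub>R outer v v + c *\<^sub>R (mat 1 - outer w w - outer v v)"

definition perp :: "real^'n \<Rightarrow> real^'n" where
  "perp x = x - (w \<bullet> x) *\<^sub>R w - (v \<bullet> x) *\<^sub>R v"

lemma inner_w_perp [simp]: "w \<bullet> perp x = 0" and inner_v_perp [simp]: "v \<bullet> perp x = 0"
  by (simp_all add: perp_def inner_diff_right)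

lemma perp_decomposition: "x = (w \<bullet> x) *\<^sub>R w + (v \<bullet> x) *\<^sub>R v + perp x"
  by (simp add: perp_def)

lemma inner_perp_perp: "perp x \<bullet> perp x = x \<bullet> x - (w \<bullet> x)\<^sup>2 - (v \<bullet> x)\<^sup>2"
  by (simp add: perp_def inner_commute power2_eq_square algebra_simps)

lemma diag3_mult_vector: "diag3 a b c *v x = (a * (w \<bullet> x)) *\<^sub>R w + (b * (v \<bullet> x)) *\<^sub>R v + c *\<^sub>R perp x"
  by (simp add: diag3_def perp_def matrix_vector_mult_add_rdistrib matrix_vector_mult_diff_rdistrib
      scaleR_matrix_vector_assoc[symmetric] outer_mult_vector)

lemma inner_w_diag3 [simp]: "w \<bullet> (diag3 a b c *v x) = a * (w \<bullet> x)"
  and inner_v_diag3 [simp]: "v \<bullet> (diag3 a b c *v x) = b * (v \<bullet> x)"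
  by (simp_all add: diag3_mult_vector inner_add_right)

lemma perp_diag3 [simp]: "perp (diag3 a b c *v x) = c *\<^sub>R perp x"
  by (simp add: perp_def diag3_mult_vector algebra_simps)

lemma diag3_eqI: "(\<And>x. G *v x = diag3 a b c *v x) \<Longrightarrow> G = diag3 a b c"
  by (simp add: matrix_eq)

lemma diag3_mult: "diag3 a b c ** diag3 a' b' c' = diag3 (a * a') (b * b') (c * c')"
proof (rule diag3_eqI)
  fix x
  have "diag3 a b c *v (diag3 a' b' c' *v x) =
      (a * (a' * (w \<bullet> x))) *\<^sub>R w + (b * (b' * (v \<bullet> x))) *\<^sub>R v + c *\<^sub>R (c' *\<^sub>R perp x)"
    by (simp only: diag3_mult_vector[of a b c] inner_w_diag3 inner_v_diag3 perp_diag3)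
  then show "(diag3 a b c ** diag3 a' b' c') *v x = diag3 (a * a') (b * b') (c * c') *v x"
    by (simp add: matrix_vector_mul_assoc[symmetric] diag3_mult_vector mult.assoc)
qed

lemma diag3_add: "diag3 a b c + diag3 a' b' c' = diag3 (a + a') (b + b') (c + c')"
  and diag3_diff: "diag3 a b c - diag3 a' b' c' = diag3 (a - a') (b - b') (c - c')"
  and scaleR_diag3: "r *\<^sub>R diag3 a b c = diag3 (r * a) (r * b) (r * c)"
  by (simp_all add: diag3_def algebra_simps)

lemma diag3_1: "diag3 1 1 1 = mat 1" and diag3_0: "diag3 0 0 0 = 0"
  by (simp_all add: diag3_def)

lemma transpose_diag3: "transpose (diag3 a b c) = diag3 a b c"
  by (simp add: diag3_def transpose_def outer_def mat_def vec_eq_iff mult.commute)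

lemma quad_form_diag3:
  "quad_form (diag3 a b c) x = a * (w \<bullet> x)\<^sup>2 + b * (v \<bullet> x)\<^sup>2 + c * (x \<bullet> x - (w \<bullet> x)\<^sup>2 - (v \<bullet> x)\<^sup>2)"
proof -
  have "perp x \<bullet> perp x = (x - (w \<bullet> x) *\<^sub>R w - (v \<bullet> x) *\<^sub>R v) \<bullet> perp x"
    by (subst (1) perp_def) (rule refl)
  then have "x \<bullet> perp x = perp x \<bullet> perp x"
    by (simp add: inner_diff_left)
  then show ?thesis
    by (simp add: quad_form_def diag3_mult_vector inner_add_right inner_perp_perp power2_eq_square inner_commute)
qed

lemma psd_diag3: "a \<ge> 0 \<Longrightarrow> b \<ge> 0 \<Longrightarrow> c \<ge> 0 \<Longrightarrow> psd (diag3 a b c)"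
  unfolding psd_def using quad_form_diag3[of a b c] inner_perp_perp
  by (simp add: transpose_diag3 quad_form_def) (metis add_nonneg_nonneg inner_ge_zero mult_nonneg_nonneg zero_le_power2)

lemma inv_family_iff: "M \<in> inv_family w v \<longleftrightarrow> (\<exists>a b c. a \<ge> 0 \<and> b \<ge> 0 \<and> c \<ge> 0 \<and> M = diag3 a b c)"
  by (auto simp: inv_family_def diag3_def)

lemma diag3_of_eigenvectors:
  fixes G :: "real^'n^'n"
  assumes sym: "transpose G = G" and Gw: "G *v w = \<alpha> *\<^sub>R w" and Gv: "G *v v = \<beta> *\<^sub>R v"
    and Gp: "\<And>p. w \<bullet> p = 0 \<Longrightarrow> v \<bullet> p = 0 \<Longrightarrow> \<exists>c. G *v p = c *\<^sub>R p"
  obtains \<gamma> where "G = diag3 \<alpha> \<beta> \<gamma>"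
proof -
  have S: "subspace {p. w \<bullet> p = 0 \<and> v \<bullet> p = 0}"
    by (auto simp: subspace_def inner_add_right)
  obtain \<gamma> where \<gamma>: "\<And>p. p \<in> {p. w \<bullet> p = 0 \<and> v \<bullet> p = 0} \<Longrightarrow> G *v p = \<gamma> *\<^sub>R p"
    by (rule eigenvalue_const_on_subspace[OF sym S]) (use Gp in auto)
  have "G = diag3 \<alpha> \<beta> \<gamma>"
  proof (rule diag3_eqI)
    fix x
    have "G *v x = (w \<bullet> x) *\<^sub>R (G *v w) + (v \<bullet> x) *\<^sub>R (G *v v) + G *v perp x"
      by (subst (1) perp_decomposition)
        (simp add: matrix_vector_right_distrib scaleR_matrix_vector_assoc matrix_scaleR_vector_ac)
    then show "G *v x = diag3 \<alpha> \<beta> \<gamma> *v x"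
      by (simp add: Gw Gv \<gamma> diag3_mult_vector mult.commute)
  qed
  then show ?thesis by (rule that)
qed

lemma congruence_diag3_mult:
  fixes A :: "real^'n^'n"
  assumes "A ** transpose A = diag3 s1 s2 s3"
  shows "(transpose A ** diag3 f1 f2 f3 ** A) ** (transpose A ** diag3 k1 k2 k3 ** A)
       = transpose A ** diag3 (f1 * s1 * k1) (f2 * s2 * k2) (f3 * s3 * k3) ** A"
proof -
  have "(transpose A ** diag3 f1 f2 f3 ** A) ** (transpose A ** diag3 k1 k2 k3 ** A)
      = transpose A ** (diag3 f1 f2 f3 ** ((A ** transpose A) ** diag3 k1 k2 k3)) ** A"
    by (simp add: matrix_mul_assoc)
  also have "\<dots> = transpose A ** diag3 (f1 * s1 * k1) (f2 * s2 * k2) (f3 * s3 * k3) ** A"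
    by (simp add: assms diag3_mult mult.assoc)
  finally show ?thesis .
qed

lemma diag3_mult_transpose:
  fixes W :: "real^'n^'n"
  assumes "W ** transpose W = diag3 a b c"
  shows "(diag3 p q r ** W) ** transpose (diag3 p q r ** W) = diag3 (p * a * p) (q * b * q) (r * c * r)"
proof -
  have "(diag3 p q r ** W) ** transpose (diag3 p q r ** W) = diag3 p q r ** (W ** transpose W) ** diag3 p q r"
    by (simp add: matrix_transpose_mul transpose_diag3 matrix_mul_assoc)
  then show ?thesis by (simp add: assms diag3_mult)
qed

text \<open>
  With \<open>h = pinv_sqrt s\<close> for the eigenvalues \<open>s\<close> of \<open>A A\<^sup>T\<close>, the matrix \<open>A\<^sup>T diag3 h A\<close> is
  the positive semidefinite square root of \<open>A\<^sup>T A\<close> and \<open>A\<^sup>T diag3 h\<^sup>3 A\<close> is its pseudo-inverse.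
\<close>

lemma polar_eq_diag3_mult:
  fixes A :: "real^'n^'n"
  assumes AA: "A ** transpose A = diag3 s1 s2 s3" and s: "s1 \<ge> 0" "s2 \<ge> 0" "s3 \<ge> 0"
  shows "polar A = diag3 (pinv_sqrt s1) (pinv_sqrt s2) (pinv_sqrt s3) ** A"
proof -
  let ?h1 = "pinv_sqrt s1" and ?h2 = "pinv_sqrt s2" and ?h3 = "pinv_sqrt s3"
  note h1 = pinv_sqrt_identities[OF s(1)] and h2 = pinv_sqrt_identities[OF s(2)]
    and h3 = pinv_sqrt_identities[OF s(3)]
  define S where "S = transpose A ** diag3 ?h1 ?h2 ?h3 ** A"
  define X where "X = transpose A ** diag3 (?h1 * ?h1 * ?h1) (?h2 * ?h2 * ?h2) (?h3 * ?h3 * ?h3) ** A"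
  define t1 where "t1 = 1 - ?h1 * s1 * ?h1"
  define t2 where "t2 = 1 - ?h2 * s2 * ?h2"
  define t3 where "t3 = 1 - ?h3 * s3 * ?h3"
  have "diag3 t1 t2 t3 ** A = 0"
    by (rule mult_transpose_eq_0)
      (simp only: diag3_mult_transpose[OF AA] t1_def t2_def t3_def h1(4) h2(4) h3(4) diag3_0)
  then have kernel: "transpose A ** diag3 t1 t2 t3 ** A = 0"
    by (simp add: matrix_mul_assoc[symmetric])
  have "S ** S = transpose A ** (diag3 (?h1 * s1 * ?h1) (?h2 * s2 * ?h2) (?h3 * s3 * ?h3) + diag3 t1 t2 t3) ** A"
    unfolding S_def congruence_diag3_mult[OF AA]
    by (simp add: kernel matrix_add_ldistrib matrix_add_rdistrib)
  also have "\<dots> = transpose A ** A" by (simp add: diag3_add t1_def t2_def t3_def diag3_1)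
  finally have "psd_sqrt (transpose A ** A) = S"
    by (intro psd_sqrt_eqI) (simp_all add: S_def psd_congruence psd_diag3 pinv_sqrt_nonneg)
  moreover have "pinv S = X"
    by (rule pinv_eqI) (simp_all only: S_def X_def congruence_diag3_mult[OF AA] transpose_congruence
        transpose_diag3 h1(1,2) h2(1,2) h3(1,2))
  ultimately have "polar A = (A ** transpose A) ** diag3 (?h1 * ?h1 * ?h1) (?h2 * ?h2 * ?h2) (?h3 * ?h3 * ?h3) ** A"
    by (simp add: polar_def X_def matrix_mul_assoc)
  also have "\<dots> = diag3 ?h1 ?h2 ?h3 ** A" by (simp add: AA diag3_mult h1(3) h2(3) h3(3))
  finally show ?thesis .
qed

lemma diff_scaleR_diag3_mult: "W - r *\<^sub>R (diag3 a b c ** W) = diag3 (1 - r * a) (1 - r * b) (1 - r * c) ** W"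
  for W :: "real^'n^'n"
proof -
  have "W - r *\<^sub>R (diag3 a b c ** W) = (diag3 1 1 1 - r *\<^sub>R diag3 a b c) ** W"
    by (simp add: diag3_1 scalar_matrix_assoc matrix_diff_rdistrib)
  then show ?thesis by (simp add: scaleR_diag3 diag3_diff)
qed

lemma diag3_mult_in_inv_family:
  fixes W :: "real^'n^'n"
  assumes "W ** transpose W \<in> inv_family w v"
  shows "(diag3 p q r ** W) ** transpose (diag3 p q r ** W) \<in> inv_family w v"
proof -
  obtain a b c where "a \<ge> 0" "b \<ge> 0" "c \<ge> 0" and W: "W ** transpose W = diag3 a b c"
    using assms by (auto simp: inv_family_iff)
  then show ?thesis
    unfolding diag3_mult_transpose[OF W] inv_family_iff by (blast intro: mult_nonneg_sandwich)
qed

lemma polar_diag3_mult: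
  fixes W :: "real^'n^'n"
  assumes "W ** transpose W \<in> inv_family w v"
  obtains p q r where "polar (diag3 \<alpha> \<beta> \<gamma> ** W) = diag3 p q r ** W"
proof -
  obtain a b c where abc: "a \<ge> 0" "b \<ge> 0" "c \<ge> 0" and W: "W ** transpose W = diag3 a b c"
    using assms by (auto simp: inv_family_iff)
  have "polar (diag3 \<alpha> \<beta> \<gamma> ** W) =
      diag3 (pinv_sqrt (\<alpha> * a * \<alpha>)) (pinv_sqrt (\<beta> * b * \<beta>)) (pinv_sqrt (\<gamma> * c * \<gamma>)) ** (diag3 \<alpha> \<beta> \<gamma> ** W)"
    by (intro polar_eq_diag3_mult diag3_mult_transpose[OF W] mult_nonneg_sandwich abc)
  then show ?thesis
    by (intro that) (simp add: matrix_mul_assoc diag3_mult)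
qed

end

section \<open>The spiked Gaussian model\<close>

locale spiked_model = orthonormal_pair wstar v for wstar v :: "real^'n::finite" +
  fixes lam \<sigma> :: real
  assumes lam_pos: "lam > 0"
begin

abbreviation covariance :: "real^'n^'n" where
  "covariance \<equiv> mat 1 + lam *\<^sub>R outer v v"

lemma gauss_density_covariance:
  "gauss_density covariance x =
    gauss_density covariance 0 * exp (- (x \<bullet> x - lam / (1 + lam) * (v \<bullet> x)\<^sup>2) / 2)"
proof -
  have "x \<bullet> (matrix_inv covariance *v x) = x \<bullet> x - lam / (1 + lam) * (v \<bullet> x)\<^sup>2"
    using lam_pos
    by (simp add: matrix_inv_rank_one_update matrix_vector_mult_diff_rdistrib outer_mult_vector
        scaleR_matrix_vector_assoc[symmetric] inner_diff_right power2_eq_square inner_commute)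
  then show ?thesis by (simp add: gauss_density_def)
qed

lemma gauss_density_reflection:
  assumes "norm u = 1" "u \<bullet> v = 0 \<or> u = v"
  shows "gauss_density covariance (reflection u x) = gauss_density covariance x"
  using inner_reflection_sq[OF assms, of x] inner_reflection_reflection[OF assms(1), of x x]
  by (simp add: gauss_density_covariance[of "reflection u x"] gauss_density_covariance[of x])

sublocale R: quadratic_regression "gauss_density covariance" "\<bar>gauss_density covariance 0\<bar>"
  "(1 - lam / (1 + lam)) / 2" wstar \<sigma>
proof
  define \<kappa> where "\<kappa> = lam / (1 + lam)"
  have \<kappa>: "0 \<le> \<kappa>" "\<kappa> < 1" using lam_pos by (auto simp: \<kappa>_def field_simps)
  show "gauss_density covariance \<in> borel_measurable borel"
    by (subst gauss_density_covariance[abs_def]) measurable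
  show "(1 - lam / (1 + lam)) / 2 > 0" using \<kappa> by (simp add: \<kappa>_def)
  fix x :: "real^'n"
  have "(v \<bullet> x)\<^sup>2 \<le> x \<bullet> x" using Cauchy_Schwarz_ineq[of v x] by simp
  then have "- (x \<bullet> x - \<kappa> * (v \<bullet> x)\<^sup>2) / 2 \<le> - ((1 - \<kappa>) / 2) * (x \<bullet> x)"
    using mult_left_mono[of "(v \<bullet> x)\<^sup>2" "x \<bullet> x" \<kappa>] \<kappa> by (simp add: field_simps)
  then show "gauss_density covariance x \<le>
      \<bar>gauss_density covariance 0\<bar> * exp (- ((1 - lam / (1 + lam)) / 2) * (x \<bullet> x))"
    unfolding gauss_density_covariance[of x] \<kappa>_def[symmetric]
    by (intro mult_mono) auto
qed

lemma pop_loss_eq_risk: "pop_loss covariance wstar \<sigma> W = R.risk (W ** transpose W)"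
  by (simp add: pop_loss_def R.risk_def R.residual_def data_measure_eq_joint_measure sum_column_inner_sq)

lemma grad_pop_loss: "grad (pop_loss covariance wstar \<sigma>) W = 2 *\<^sub>R (R.risk_grad (W ** transpose W) ** W)"
  unfolding pop_loss_eq_risk[abs_def] by (rule R.grad_risk_mult_transpose)

lemma risk_grad_diag3:
  obtains \<alpha> \<beta> \<gamma> where "R.risk_grad (diag3 a b c) = diag3 \<alpha> \<beta> \<gamma>"
proof -
  let ?G = "R.risk_grad (diag3 a b c)"
  have eigen: "?G *v u = (u \<bullet> (?G *v u)) *\<^sub>R u"
    if u: "norm u = 1" and uw: "u \<bullet> wstar = 0 \<or> u = wstar" and uv: "u \<bullet> v = 0 \<or> u = v" for u
  proof (rule R.risk_grad_eigenvector_reflection[OF u gauss_density_reflection[OF u uv]])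
    show "(reflection u x \<bullet> wstar)\<^sup>2 = (x \<bullet> wstar)\<^sup>2" for x
      using inner_reflection_sq[OF u uw] by (simp add: inner_commute)
    show "quad_form (diag3 a b c) (reflection u x) = quad_form (diag3 a b c) x" for x
      by (simp only: quad_form_diag3 inner_reflection_sq[OF u uw] inner_reflection_sq[OF u uv]
          inner_reflection_reflection[OF u])
  qed
  have Gw: "?G *v wstar = (wstar \<bullet> (?G *v wstar)) *\<^sub>R wstar" by (rule eigen) (simp_all add: norm_w)
  have Gv: "?G *v v = (v \<bullet> (?G *v v)) *\<^sub>R v" by (rule eigen) (simp_all add: norm_v)
  have "\<exists>c. ?G *v p = c *\<^sub>R p" if p: "wstar \<bullet> p = 0" "v \<bullet> p = 0" for p
  proof (cases "p = 0")
    case False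
    define u where "u = p /\<^sub>R norm p"
    have "norm u = 1" "u \<bullet> wstar = 0" "u \<bullet> v = 0"
      using False p by (simp_all add: u_def inner_commute)
    then have Gu: "?G *v u = (u \<bullet> (?G *v u)) *\<^sub>R u" by (intro eigen) simp_all
    have p_eq: "p = norm p *\<^sub>R u" using False by (simp add: u_def)
    have "?G *v p = norm p *\<^sub>R (?G *v u)"
      by (subst (1) p_eq) (simp add: matrix_scaleR_vector_ac scaleR_matrix_vector_assoc)
    also have "\<dots> = (u \<bullet> (?G *v u)) *\<^sub>R (norm p *\<^sub>R u)" by (subst Gu) simp
    also have "\<dots> = (u \<bullet> (?G *v u)) *\<^sub>R p" by (simp only: p_eq[symmetric])
    finally show ?thesis by blast
  qed simp
  then obtain \<gamma> where "?G = diag3 (wstar \<bullet> (?G *v wstar)) (v \<bullet> (?G *v v)) \<gamma>"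
    by (rule diag3_of_eigenvectors[OF R.transpose_risk_grad Gw Gv])
  then show ?thesis by (rule that)
qed

lemma grad_pop_loss_diag3:
  fixes W :: "real^'n^'n"
  assumes "W ** transpose W \<in> inv_family wstar v"
  obtains \<alpha> \<beta> \<gamma> where "grad (pop_loss covariance wstar \<sigma>) W = diag3 \<alpha> \<beta> \<gamma> ** W"
proof -
  obtain a b c where "W ** transpose W = diag3 a b c" using assms by (auto simp: inv_family_iff)
  moreover obtain \<alpha> \<beta> \<gamma> where "R.risk_grad (diag3 a b c) = diag3 \<alpha> \<beta> \<gamma>" by (rule risk_grad_diag3)
  ultimately show ?thesis
    by (intro that[of "2 * \<alpha>" "2 * \<beta>" "2 * \<gamma>"]) (simp add: grad_pop_loss scalar_matrix_assoc scaleR_diag3)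
qed

lemma gradient_step_in_inv_family:
  fixes W :: "real^'n^'n" and \<eta> :: real
  assumes "W ** transpose W \<in> inv_family wstar v"
  defines "W' \<equiv> W - \<eta> *\<^sub>R grad (pop_loss covariance wstar \<sigma>) W"
  shows "W' ** transpose W' \<in> inv_family wstar v"
proof -
  obtain \<alpha> \<beta> \<gamma> where "grad (pop_loss covariance wstar \<sigma>) W = diag3 \<alpha> \<beta> \<gamma> ** W"
    using grad_pop_loss_diag3[OF assms(1)] by blast
  then show ?thesis
    unfolding W'_def by (simp add: diff_scaleR_diag3_mult diag3_mult_in_inv_family[OF assms(1)])
qed

lemma spectral_step_in_inv_family:
  fixes W :: "real^'n^'n" and \<eta> :: real
  assumes "W ** transpose W \<in> inv_family wstar v"
  defines "W' \<equiv> W - \<eta> *\<^sub>R polar (grad (pop_loss covariance wstar \<sigma>) W)"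
  shows "W' ** transpose W' \<in> inv_family wstar v"
proof -
  obtain \<alpha> \<beta> \<gamma> where "grad (pop_loss covariance wstar \<sigma>) W = diag3 \<alpha> \<beta> \<gamma> ** W"
    using grad_pop_loss_diag3[OF assms(1)] by blast
  moreover obtain p q r where "polar (diag3 \<alpha> \<beta> \<gamma> ** W) = diag3 p q r ** W"
    using polar_diag3_mult[OF assms(1)] by blast
  ultimately show ?thesis
    unfolding W'_def by (simp add: diff_scaleR_diag3_mult diag3_mult_in_inv_family[OF assms(1)])
qed

end

theorem lemma3p1:
  fixes wstar v :: "real ^ 'd" and lam \<sigma> \<eta> \<eta>' :: real
    and W W' :: "nat \<Rightarrow> real ^ 'd ^ 'd"
  assumes "CARD('d) \<ge> 3"
    and "lam > 0"
    and "norm wstar = 1" and "norm v = 1" and "v \<bullet> wstar = 0"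
    and "\<eta> > 0" and "\<eta>' > 0"
    and "\<And>k. W (Suc k) = W k - \<eta> *\<^sub>R
            polar (grad (pop_loss (mat 1 + lam *\<^sub>R outer v v) wstar \<sigma>) (W k))"
    and "\<And>k. W' (Suc k) = W' k - \<eta>' *\<^sub>R
            grad (pop_loss (mat 1 + lam *\<^sub>R outer v v) wstar \<sigma>) (W' k)"
  shows "(W 0 ** transpose (W 0) \<in> inv_family wstar v \<longrightarrow>
            (\<forall>k. W k ** transpose (W k) \<in> inv_family wstar v))
       \<and> (W' 0 ** transpose (W' 0) \<in> inv_family wstar v \<longrightarrow>
            (\<forall>k. W' k ** transpose (W' k) \<in> inv_family wstar v))"
proof -
  interpret spiked_model wstar v lam \<sigma>
    by unfold_locales (use assms(2-5) in auto)
  have "W k ** transpose (W k) \<in> inv_family wstar v" if "W 0 ** transpose (W 0) \<in> inv_family wstar v" for k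
    using that by (induction k) (simp_all add: assms(8) spectral_step_in_inv_family)
  moreover have "W' k ** transpose (W' k) \<in> inv_family wstar v" if "W' 0 ** transpose (W' 0) \<in> inv_family wstar v" for k
    using that by (induction k) (simp_all add: assms(9) gradient_step_in_inv_family)
  ultimately show ?thesis by blast
qed

end
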